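(* Consider the problem $\min_{x\in\mathbb{R}^n} F(x):=f(x)+g(x)$ subject to $Ax=b$, under the setting described in the context, and let $\lambda^*$ be an optimal solution of $\max_{\lambda\in\mathbb{R}^m} d(\lambda)$. Let $\{\lambda^k\}$ be generated by the IAL framework described in the context, where the tolerance sequence $\{\eta_k\}$ is positive, nonincreasing, and satisfies $\sum_{k=1}^{+\infty}\eta_k<+\infty$. Let $\delta_k:=d(\lambda^* )-d(\lambda^k)$, $$B:=\sqrt{\|\lambda^1-\lambda^*\|^2+2\beta\sum_{k=1}^{+\infty}\eta_k},\qquad \theta:=\frac{\beta}{4B^2},$$ and let $k_0\ge 4$ be an integer such that $$\max_{k\ge k_0}\delta_k\le\frac{1}{2\theta}\quad\text{and}\quad\max_{k\ge k_0}\eta_k\le\frac{1}{24\theta}.$$ Suppose moreover that $$\sqrt{\frac{\eta_{k+1}}{\eta_k}}\ge\frac{k-2}{k},\qquad k=k_0,k_0+1,\dots.$$ Define $\tau_1:=\frac{k_0}{4\theta}$ and $\tau_2:=\frac{1}{4\theta\sqrt{\eta_{k_0}}}$. Then $$\delta_k\le\frac{\tau_1}{k}+\tau_2\sqrt{\eta_k},\qquad k=k_0,k_0+1,\dots.$$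
   Context: Let $A\in\mathbb{R}^{m\times n}$ and $b\in\mathbb{R}^m$. Let $f:\mathbb{R}^n\to\mathbb{R}$ be convex and differentiable with Lipschitz continuous gradient. Let $g:\mathbb{R}^n\to\mathbb{R}\cup\{+\infty\}$ be a closed proper convex (possibly nonsmooth) function with bounded domain. Fix a penalty parameter $\beta>0$. For $\lambda\in\mathbb{R}^m$, define $$\hat f_\beta(x;\lambda):=f(x)+\langle\lambda,Ax-b\rangle+\tfrac{\beta}{2}\|Ax-b\|^2,\qquad \mathcal{L}_\beta(x;\lambda):=\hat f_\beta(x;\lambda)+g(x),$$ and $d(\lambda):=\min_{x\in\mathbb{R}^n}\mathcal{L}_\beta(x;\lambda)$. Here $\nabla\hat f_\beta(x;\lambda)$ denotes the gradient of $\hat f_\beta$ with respect to $x$. IAL framework: choose $x^1\in\operatorname{dom} g$, $\lambda^1\in\mathbb{R}^m$, and a nonnegative sequence $\{\eta_k\}$. For $k=1,2,\dots$: find a point $x^{k+1}$ such that $$\max_{x\in\mathbb{R}^n}\Big\{\langle\nabla\hat f_\beta(x^{k+1};\lambda^k),\,x^{k+1}-x\rangle+g(x^{k+1})-g(x)\Big\}\le\eta_k,$$ and then set $\lambda^{k+1}=\lambda^k+\beta(Ax^{k+1}-b)$. *)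

theory Defs
  imports "HOL-Analysis.Analysis"
begin

definition grad :: "('a::real_inner \<Rightarrow> real) \<Rightarrow> 'a \<Rightarrow> 'a" where
  "grad F x = (THE D. GDERIV F x :> D)"

definition dom_e :: "('a \<Rightarrow> ereal) \<Rightarrow> 'a set" where
  "dom_e g = {x. g x < \<infinity>}"

definition epi :: "('a \<Rightarrow> ereal) \<Rightarrow> ('a \<times> real) set" where
  "epi g = {(x, t). g x \<le> ereal t}"

definition proper_fun :: "('a \<Rightarrow> ereal) \<Rightarrow> bool" where
  "proper_fun g \<longleftrightarrow> (\<forall>x. g x \<noteq> -\<infinity>) \<and> (\<exists>x. g x < \<infinity>)"

definition convex_fun :: "('a::real_vector \<Rightarrow> ereal) \<Rightarrow> bool" where
  "convex_fun g \<longleftrightarrow> convex (epi g)"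

definition closed_fun :: "('a::topological_space \<Rightarrow> ereal) \<Rightarrow> bool" where
  "closed_fun g \<longleftrightarrow> closed (epi g)"

definition fhat :: "(real^'n \<Rightarrow> real) \<Rightarrow> real^'n^'m \<Rightarrow> real^'m \<Rightarrow> real
    \<Rightarrow> real^'m \<Rightarrow> real^'n \<Rightarrow> real" where
  "fhat f A b \<beta> lam x = f x + inner lam (A *v x - b) + \<beta> / 2 * (norm (A *v x - b))\<^sup>2"

definition AL :: "(real^'n \<Rightarrow> real) \<Rightarrow> (real^'n \<Rightarrow> ereal) \<Rightarrow> real^'n^'m \<Rightarrow> real^'m \<Rightarrow> real
    \<Rightarrow> real^'m \<Rightarrow> real^'n \<Rightarrow> ereal" where
  "AL f g A b \<beta> lam x = ereal (fhat f A b \<beta> lam x) + g x"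

text \<open>Dual function d(lam) = min_x L_beta(x;lam) (finite and attained under the standing
  assumptions; we take the infimum and read it as a real number).\<close>
definition dualf :: "(real^'n \<Rightarrow> real) \<Rightarrow> (real^'n \<Rightarrow> ereal) \<Rightarrow> real^'n^'m \<Rightarrow> real^'m \<Rightarrow> real
    \<Rightarrow> real^'m \<Rightarrow> real" where
  "dualf f g A b \<beta> lam = real_of_ereal (INF x. AL f g A b \<beta> lam x)"

end

theory Submission
  imports Defs
begin

(* Inexact stationarity of x(k+1) for L_beta(.; lam k), together with convexity of f, gives for
   every multiplier mu the one-step estimate
     d mu - d (lam (k+1)) <= <mu - lam k, r k> - beta/2 |r k|^2 + eta k,   r k = A x(k+1) - b.
   For mu = lamstar it shows that |lam k - lamstar|^2 grows by at most 2 beta eta k per step, so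
   |lam k - lamstar| <= B. Using it for mu = lamstar (with Cauchy-Schwarz) and for mu = lam k, the
   scaled gap e k = 4 theta delta k obeys e (k+1) <= phi (min (e k) 1) + 4 theta eta k with
   phi w = w - w^2/2, and an induction from k0 driven by the ratio condition on eta yields
   e k <= k0/k + sqrt (eta k / eta k0).
   The Lipschitz continuity of grad f and the hypotheses on g beyond properness only make the
   subproblems well posed; the estimate does not use them. *)

lemma gderiv_unique:
  assumes "GDERIV F x :> D" and "GDERIV F x :> D'"
  shows "D' = D"
proof -
  have "(\<lambda>h. inner h D') = (\<lambda>h. inner h D)"
    using assms has_derivative_unique unfolding gderiv_def by blast
  then have "inner (D' - D) (D' - D) = 0" by (metis inner_diff_left inner_diff_right diff_self)
  then show ?thesis by simp
qed

lemma grad_eqI: "GDERIV F x :> D \<Longrightarrow> grad F x = D"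
  unfolding grad_def by (blast intro: the_equality gderiv_unique)

lemma gderiv_grad:
  fixes F :: "'a::euclidean_space \<Rightarrow> real"
  assumes "F differentiable (at x)"
  shows "GDERIV F x :> grad F x"
proof -
  obtain F' where F': "(F has_derivative F') (at x)"
    using assms unfolding differentiable_def by blast
  have "F' h = inner h (adjoint F' 1)" for h
    using adjoint_works[OF has_derivative_linear[OF F'], of h 1] by simp
  then have "GDERIV F x :> adjoint F' 1"
    unfolding gderiv_def using F' by (metis ext)
  then show ?thesis by (simp add: grad_eqI)
qed

lemma convex_on_gderiv_ge:
  fixes F :: "'a::real_inner \<Rightarrow> real"
  assumes cv: "convex_on UNIV F" and D: "GDERIV F x :> D"
  shows "F x + inner D (z - x) \<le> F z"
proof -
  define \<phi> where "\<phi> t = F (x + t *\<^sub>R (z - x))" for t :: real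
  have "convex_on UNIV \<phi>"
  proof (rule convex_onI)
    fix u s t :: real assume u: "0 < u" "u < 1"
    have "x + ((1 - u) * s + u * t) *\<^sub>R (z - x)
        = (1 - u) *\<^sub>R (x + s *\<^sub>R (z - x)) + u *\<^sub>R (x + t *\<^sub>R (z - x))"
      by (simp add: algebra_simps)
    then show "\<phi> ((1 - u) *\<^sub>R s + u *\<^sub>R t) \<le> (1 - u) * \<phi> s + u * \<phi> t"
      unfolding \<phi>_def using cv u by (simp add: convex_on_def del: scaleR_add_right)
  qed simp
  moreover have "(\<phi> has_real_derivative inner (z - x) D) (at 0)"
  proof -
    have "(F has_derivative (\<lambda>h. inner h D)) (at (x + 0 *\<^sub>R (z - x)))"
      using D by (simp add: gderiv_def)
    then have "(\<phi> has_derivative (\<lambda>t. inner (t *\<^sub>R (z - x)) D)) (at 0)"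
      unfolding \<phi>_def by (rule has_derivative_compose[rotated]) (auto intro!: derivative_eq_intros)
    then show ?thesis by (simp add: has_field_derivative_def mult.commute[of _ "inner (z - x) D"])
  qed
  ultimately have "\<phi> 1 - \<phi> 0 \<ge> inner (z - x) D * (1 - 0)"
    by (intro convex_on_imp_above_tangent[where A=UNIV]) auto
  then show ?thesis unfolding \<phi>_def by (simp add: inner_commute)
qed

lemma gderiv_fhat:
  fixes A :: "real^'n^'m"
  assumes "GDERIV f x :> Df"
  shows "GDERIV (fhat f A b \<beta> lam) x :> Df + (lam + \<beta> *\<^sub>R (A *v x - b)) v* A"
proof -
  define r where "r = A *v x - b"
  have fhat_eq: "fhat f A b \<beta> lam
      = (\<lambda>x. f x + inner lam (A *v x - b) + \<beta> / 2 * inner (A *v x - b) (A *v x - b))"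
    by (auto simp: fhat_def power2_norm_eq_inner)
  have "(fhat f A b \<beta> lam has_derivative
      (\<lambda>h. inner h Df + inner lam (A *v h) + \<beta> / 2 * (inner (A *v h) r + inner r (A *v h)))) (at x)"
    using assms unfolding gderiv_def fhat_eq r_def
    by (auto intro!: derivative_eq_intros bounded_linear.has_derivative[OF matrix_vector_mul_bounded_linear])
  moreover have "inner h Df + inner lam (A *v h) + \<beta> / 2 * (inner (A *v h) r + inner r (A *v h))
      = inner h (Df + (lam + \<beta> *\<^sub>R r) v* A)" for h
    by (simp add: inner_add_right inner_commute[of h "_ v* A"] dot_lmul_matrix inner_add_left
        inner_commute[of "A *v h"] algebra_simps)
  ultimately show ?thesis unfolding gderiv_def r_def by simp
qed

lemma AL_ge_of_inexact_stationary:
  fixes A :: "real^'n^'m" and f :: "real^'n \<Rightarrow> real"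
  assumes f_convex: "convex_on UNIV f" and f_diff: "\<And>z. f differentiable (at z)"
    and g_not_minf: "\<And>z. g z \<noteq> -\<infinity>" and gy: "g y = ereal Gy"
    and stat: "\<And>z. ereal (inner (grad (fhat f A b \<beta> lam) y) (y - z)) + g y - g z \<le> ereal \<epsilon>"
    and lam': "lam' = lam + \<beta> *\<^sub>R (A *v y - b)"
  shows "ereal (f y + Gy + inner lam' (A *v y - b) - \<epsilon>
            + inner (\<mu> - lam') (A *v z - b) + \<beta>/2 * (norm (A *v z - b))\<^sup>2) \<le> AL f g A b \<beta> \<mu> z"
proof (cases "g z")
  case (real Gz)
  define Df where "Df = grad f y"
  have Df: "GDERIV f y :> Df" unfolding Df_def by (rule gderiv_grad[OF f_diff])
  have "grad (fhat f A b \<beta> lam) y = Df + lam' v* A"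
    unfolding lam' by (rule grad_eqI[OF gderiv_fhat[OF Df]])
  then have "inner Df (y - z) + inner lam' (A *v y - b) - inner lam' (A *v z - b) + Gy - Gz \<le> \<epsilon>"
    using stat[of z] by (simp add: gy real inner_add_left dot_lmul_matrix
        matrix_vector_mult_diff_distrib inner_diff_right)
  moreover have "f y + inner Df (z - y) \<le> f z" by (rule convex_on_gderiv_ge[OF f_convex Df])
  ultimately show ?thesis
    by (simp add: AL_def fhat_def real inner_diff_left inner_diff_right)
qed (use g_not_minf in \<open>auto simp: AL_def\<close>)

lemma inner_add_half_norm_sq_ge:
  fixes u r :: "'a::real_inner"
  assumes "\<beta> > 0"
  shows "- ((norm u)\<^sup>2 / (2 * \<beta>)) \<le> inner u r + \<beta>/2 * (norm r)\<^sup>2"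
proof -
  have "0 \<le> (norm (\<beta> *\<^sub>R r + u))\<^sup>2 / (2 * \<beta>)" using assms by simp
  also have "\<dots> = inner (\<beta> *\<^sub>R r + u) (\<beta> *\<^sub>R r + u) / (2 * \<beta>)"
    by (simp only: power2_norm_eq_inner)
  also have "\<dots> = inner u r + \<beta>/2 * inner r r + inner u u / (2 * \<beta>)"
    using assms by (simp add: inner_add_left inner_add_right inner_commute[of r u] field_simps)
  also have "\<dots> = inner u r + \<beta>/2 * (norm r)\<^sup>2 + (norm u)\<^sup>2 / (2 * \<beta>)"
    by (simp only: power2_norm_eq_inner)
  finally show ?thesis by simp
qed

lemma real_of_ereal_INF_bounds:
  fixes F :: "'a \<Rightarrow> ereal"
  assumes lower: "\<And>z. ereal C \<le> F z" and at_y: "F y = ereal v"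
  shows "C \<le> real_of_ereal (INF z. F z)" and "real_of_ereal (INF z. F z) \<le> v"
proof -
  have "ereal C \<le> (INF z. F z)" using lower by (rule INF_greatest)
  moreover have "(INF z. F z) \<le> ereal v" using at_y by (metis INF_lower UNIV_I)
  ultimately obtain t where "(INF z. F z) = ereal t" "C \<le> t" "t \<le> v"
    by (cases "(INF z. F z)") auto
  then show "C \<le> real_of_ereal (INF z. F z)" and "real_of_ereal (INF z. F z) \<le> v" by auto
qed

lemma half_sq_mono:
  fixes w u :: real
  assumes "0 \<le> w" "w \<le> u" "u \<le> 1"
  shows "w - w\<^sup>2/2 \<le> u - u\<^sup>2/2"
proof -
  have "0 \<le> (u - w) * (1 - (u + w)/2)" using assms by (intro mult_nonneg_nonneg) auto
  also have "\<dots> = (u - u\<^sup>2/2) - (w - w\<^sup>2/2)" by (simp add: power2_eq_square field_simps)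
  finally show ?thesis by simp
qed

lemma half_sq_le: "(w::real) - w\<^sup>2/2 \<le> 1/2"
  using zero_le_power2[of "w - 1"] by (simp add: power2_eq_square algebra_simps)

lemma le_min_one_recursion:
  fixes e e' \<sigma> h :: real
  assumes "0 \<le> e" "0 \<le> \<sigma>"
    and bound1: "e' \<le> \<sigma> - \<sigma>\<^sup>2/2 + h" and bound2: "e' \<le> e - \<sigma>\<^sup>2/2 + h"
  shows "e' \<le> min e 1 - (min e 1)\<^sup>2/2 + h"
proof (cases "\<sigma> \<le> min e 1")
  case True
  then show ?thesis using half_sq_mono[of \<sigma> "min e 1"] bound1 assms by auto
next
  case False
  then have "(min e 1)\<^sup>2 \<le> \<sigma>\<^sup>2" using assms by (intro power_mono) auto
  then show ?thesis using bound1 bound2 half_sq_le[of \<sigma>] by (cases "e \<le> 1") auto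
qed

lemma rate_induction_step:
  fixes K k0 \<rho> \<rho>' w e' :: real
  assumes k0: "4 \<le> k0" "k0 \<le> K" and \<rho>: "0 \<le> \<rho>" "\<rho> \<le> 1" "\<rho> * (K - 2) / K \<le> \<rho>'"
    and w: "0 \<le> w" "w \<le> 1" "w \<le> k0 / K + \<rho>"
    and e': "e' \<le> w - w\<^sup>2/2 + \<rho>\<^sup>2/6"
  shows "e' \<le> k0 / (K + 1) + \<rho>'"
proof -
  define a where "a = k0 / K"
  have K: "K > 0" using k0 by linarith
  have a: "0 \<le> a" "a \<le> 1" "1 / K \<le> a / 4"
    using k0 K by (auto simp: a_def field_simps)
  have "a - a\<^sup>2/4 \<le> a - a / K"
    using mult_left_mono[OF a(3) a(1)] by (simp add: power2_eq_square)
  also have "\<dots> \<le> k0 / (K + 1)"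
    using K k0 by (simp add: a_def field_simps)
  finally have a_le: "a - a\<^sup>2/4 \<le> k0 / (K + 1)" .
  have "\<rho> - a * \<rho> / 2 \<le> \<rho> * (K - 2) / K"
    using mult_left_mono[OF a(3) \<rho>(1)] K by (simp add: field_simps)
  with \<rho>(3) have \<rho>_le: "\<rho> - a * \<rho> / 2 \<le> \<rho>'" by linarith
  have "e' \<le> a - a\<^sup>2/4 + \<rho> - a * \<rho> / 2"
  proof (cases "a + \<rho> \<le> 1")
    case True
    have "w - w\<^sup>2/2 \<le> (a + \<rho>) - (a + \<rho>)\<^sup>2/2"
      using True w a \<rho> by (intro half_sq_mono) (auto simp: a_def)
    moreover have "(a + \<rho>) - (a + \<rho>)\<^sup>2/2 + \<rho>\<^sup>2/6
        = (a - a\<^sup>2/4 + \<rho> - a * \<rho> / 2) - (a\<^sup>2/4 + a * \<rho> / 2 + \<rho>\<^sup>2/3)"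
      by (simp add: power2_eq_square field_simps)
    moreover have "0 \<le> a\<^sup>2/4 + a * \<rho> / 2 + \<rho>\<^sup>2/3" using a \<rho> by simp
    ultimately show ?thesis using e' by linarith
  next
    case False
    have "0 \<le> (a - (1 - \<rho>)) * (3/4 - a/4 - \<rho>/4)"
      using False a \<rho> by (intro mult_nonneg_nonneg) auto
    moreover have "(a - (1 - \<rho>)) * (3/4 - a/4 - \<rho>/4) + 3/4 + \<rho>\<^sup>2/4
        = a - a\<^sup>2/4 + \<rho> - a * \<rho> / 2"
      by (simp add: power2_eq_square field_simps)
    ultimately show ?thesis using e' half_sq_le[of w] zero_le_power2[of \<rho>] by linarith
  qed
  then show ?thesis using a_le \<rho>_le by linarith
qed

lemma rate_from_recursion:
  fixes e \<eta> :: "nat \<Rightarrow> real" and k0 :: nat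
  assumes k0: "k0 \<ge> 4"
    and eta_pos: "\<And>k. k \<ge> k0 \<Longrightarrow> \<eta> k > 0"
    and eta_noninc: "\<And>k. k \<ge> k0 \<Longrightarrow> \<eta> (Suc k) \<le> \<eta> k"
    and eta_ratio: "\<And>k. k \<ge> k0 \<Longrightarrow> (real k - 2) / real k \<le> sqrt (\<eta> (Suc k) / \<eta> k)"
    and e_nonneg: "\<And>k. k \<ge> k0 \<Longrightarrow> 0 \<le> e k"
    and e_start: "e k0 \<le> 2"
    and e_rec: "\<And>k. k \<ge> k0 \<Longrightarrow> e (Suc k) \<le> min (e k) 1 - (min (e k) 1)\<^sup>2/2 + c * \<eta> k"
    and c: "6 * c * \<eta> k0 \<le> 1" and "k \<ge> k0"
  shows "e k \<le> k0 / k + sqrt (\<eta> k / \<eta> k0)"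
  using \<open>k \<ge> k0\<close>
proof (induction k rule: dec_induct)
  case base
  show ?case using e_start eta_pos[of k0] k0 by simp
next
  case (step k)
  define \<rho> where "\<rho> j = sqrt (\<eta> j / \<eta> k0)" for j
  have "\<eta> k \<le> \<eta> k0"
    using step(1) by (induction k rule: dec_induct) (auto intro: order_trans[OF eta_noninc])
  then have \<rho>: "0 \<le> \<rho> k" "\<rho> k \<le> 1" "(\<rho> k)\<^sup>2 = \<eta> k / \<eta> k0"
    using eta_pos[of k0] eta_pos[OF step(1)] by (auto simp: \<rho>_def)
  have "\<rho> (Suc k) = sqrt (\<eta> (Suc k) / \<eta> k) * \<rho> k"
    using eta_pos[of k0] eta_pos[OF step(1)] by (simp add: \<rho>_def real_sqrt_mult[symmetric])
  then have \<rho>_Suc: "\<rho> k * (real k - 2) / real k \<le> \<rho> (Suc k)"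
    using mult_left_mono[OF eta_ratio[OF step(1)] \<rho>(1)] by (simp add: mult.commute)
  have "c * \<eta> k = (c * \<eta> k0) * (\<rho> k)\<^sup>2" using \<rho>(3) eta_pos[of k0] by simp
  also have "\<dots> \<le> (\<rho> k)\<^sup>2 / 6"
    using mult_right_mono[of "c * \<eta> k0" "1/6" "(\<rho> k)\<^sup>2"] c by simp
  finally have "c * \<eta> k \<le> (\<rho> k)\<^sup>2 / 6" .
  have "e (Suc k) \<le> real k0 / (real k + 1) + \<rho> (Suc k)"
    by (rule rate_induction_step[where w = "min (e k) 1"])
      (use k0 step \<rho> \<rho>_Suc \<open>c * \<eta> k \<le> (\<rho> k)\<^sup>2 / 6\<close> e_nonneg e_rec[OF step(1)]
        in \<open>auto simp: \<rho>_def\<close>)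
  then show ?case by (simp add: \<rho>_def add.commute)
qed

locale ial_iteration =
  fixes f :: "real^'n \<Rightarrow> real" and g :: "real^'n \<Rightarrow> ereal"
    and A :: "real^'n^'m" and b :: "real^'m" and \<beta> :: real
    and x :: "nat \<Rightarrow> real^'n" and lam :: "nat \<Rightarrow> real^'m" and \<eta> :: "nat \<Rightarrow> real"
  assumes f_convex: "convex_on UNIV f"
    and f_diff: "\<And>z. f differentiable (at z)"
    and g_not_minf: "\<And>z. g z \<noteq> -\<infinity>"
    and beta_pos: "\<beta> > 0"
    and x_step_dom: "\<And>k. k \<ge> 1 \<Longrightarrow> x (Suc k) \<in> dom_e g"
    and x_step: "\<And>k z. k \<ge> 1 \<Longrightarrow>
        ereal (inner (grad (fhat f A b \<beta> (lam k)) (x (Suc k))) (x (Suc k) - z))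
          + g (x (Suc k)) - g z \<le> ereal (\<eta> k)"
    and lam_step: "\<And>k. k \<ge> 1 \<Longrightarrow> lam (Suc k) = lam k + \<beta> *\<^sub>R (A *v x (Suc k) - b)"
begin

abbreviation "d \<equiv> dualf f g A b \<beta>"
abbreviation "resid k \<equiv> A *v x (Suc k) - b"
abbreviation "objective k \<equiv> f (x (Suc k)) + real_of_ereal (g (x (Suc k)))"

lemma g_iterate: "k \<ge> 1 \<Longrightarrow> g (x (Suc k)) = ereal (real_of_ereal (g (x (Suc k))))"
  using x_step_dom[of k] g_not_minf[of "x (Suc k)"] unfolding dom_e_def
  by (cases "g (x (Suc k))") auto

lemma AL_at_iterate:
  assumes "k \<ge> 1"
  shows "AL f g A b \<beta> \<mu> (x (Suc k))
     = ereal (objective k + inner \<mu> (resid k) + \<beta>/2 * (norm (resid k))\<^sup>2)"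
proof -
  obtain G where "g (x (Suc k)) = ereal G" using g_iterate[OF assms] by blast
  then show ?thesis by (simp add: AL_def fhat_def)
qed

lemma AL_ge:
  assumes "k \<ge> 1"
  shows "ereal (objective k + inner (lam (Suc k)) (resid k) - \<eta> k
      - (norm (\<mu> - lam (Suc k)))\<^sup>2 / (2 * \<beta>)) \<le> AL f g A b \<beta> \<mu> z"
proof -
  have "- ((norm (\<mu> - lam (Suc k)))\<^sup>2 / (2 * \<beta>))
      \<le> inner (\<mu> - lam (Suc k)) (A *v z - b) + \<beta>/2 * (norm (A *v z - b))\<^sup>2"
    by (rule inner_add_half_norm_sq_ge[OF beta_pos])
  then show ?thesis
    using AL_ge_of_inexact_stationary[OF f_convex f_diff g_not_minf g_iterate[OF assms]
        x_step[OF assms] lam_step[OF assms], of \<mu> z]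
    by (elim order_trans[rotated]) simp
qed

lemma dual_le:
  assumes "k \<ge> 1"
  shows "d \<mu> \<le> objective k + inner \<mu> (resid k) + \<beta>/2 * (norm (resid k))\<^sup>2"
  unfolding dualf_def
  by (rule real_of_ereal_INF_bounds(2)[where F="AL f g A b \<beta> \<mu>",
        OF AL_ge[OF assms] AL_at_iterate[OF assms]])

lemma dual_ge:
  assumes "k \<ge> 1"
  shows "objective k + inner (lam (Suc k)) (resid k) - \<eta> k \<le> d (lam (Suc k))"
  using real_of_ereal_INF_bounds(1)[where F="AL f g A b \<beta> (lam (Suc k))",
      OF AL_ge[OF assms] AL_at_iterate[OF assms]]
  unfolding dualf_def by simp

lemma dual_gap_step:
  assumes "k \<ge> 1"
  shows "d \<mu> - d (lam (Suc k)) \<le> inner (\<mu> - lam k) (resid k) - \<beta>/2 * (norm (resid k))\<^sup>2 + \<eta> k"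
proof -
  have "inner (lam (Suc k)) (resid k) = inner (lam k) (resid k) + \<beta> * (norm (resid k))\<^sup>2"
    using lam_step[OF assms] by (simp add: inner_add_left power2_norm_eq_inner)
  then show ?thesis
    using dual_le[OF assms, of \<mu>] dual_ge[OF assms] by (simp add: inner_diff_left)
qed

lemma multiplier_dist_step:
  assumes "k \<ge> 1"
  shows "(norm (lam (Suc k) - \<mu>))\<^sup>2 + 2 * \<beta> * (d \<mu> - d (lam (Suc k)))
      \<le> (norm (lam k - \<mu>))\<^sup>2 + 2 * \<beta> * \<eta> k"
proof -
  have step: "lam (Suc k) - \<mu> = (lam k - \<mu>) + \<beta> *\<^sub>R resid k"
    using lam_step[OF assms] by simp
  have "(norm (lam (Suc k) - \<mu>))\<^sup>2
      = (norm (lam k - \<mu>))\<^sup>2 + 2 * \<beta> * inner (lam k - \<mu>) (resid k) + \<beta>\<^sup>2 * (norm (resid k))\<^sup>2"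
    unfolding step using dot_norm[of "lam k - \<mu>" "\<beta> *\<^sub>R resid k"] by (simp add: power_mult_distrib)
  moreover have "2 * \<beta> * (d \<mu> - d (lam (Suc k)))
      \<le> 2 * \<beta> * (inner (\<mu> - lam k) (resid k) - \<beta>/2 * (norm (resid k))\<^sup>2 + \<eta> k)"
    using dual_gap_step[OF assms] beta_pos by simp
  ultimately show ?thesis
    by (simp add: inner_diff_left inner_diff_right power2_eq_square algebra_simps)
qed

lemma multiplier_dist_bound:
  assumes opt: "\<And>l. d l \<le> d \<mu>" and eta_nonneg: "\<And>k. k \<ge> 1 \<Longrightarrow> 0 \<le> \<eta> k"
    and eta_sum: "summable (\<lambda>k. \<eta> (Suc k))" and "k \<ge> 1"
  shows "norm (lam k - \<mu>) \<le> sqrt ((norm (lam 1 - \<mu>))\<^sup>2 + 2 * \<beta> * (\<Sum>k. \<eta> (Suc k)))"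
proof -
  have partial: "(norm (lam (Suc n) - \<mu>))\<^sup>2
      \<le> (norm (lam 1 - \<mu>))\<^sup>2 + 2 * \<beta> * (\<Sum>i<n. \<eta> (Suc i))" for n
  proof (induction n)
    case (Suc n)
    have "0 \<le> 2 * \<beta> * (d \<mu> - d (lam (Suc (Suc n))))" using opt beta_pos by simp
    then show ?case using Suc multiplier_dist_step[of "Suc n" \<mu>] by (simp add: distrib_left)
  qed simp
  obtain n where n: "k = Suc n" using \<open>k \<ge> 1\<close> by (cases k) auto
  have "(\<Sum>i<n. \<eta> (Suc i)) \<le> (\<Sum>k. \<eta> (Suc k))"
    using eta_sum eta_nonneg by (intro sum_le_suminf) auto
  then have "2 * \<beta> * (\<Sum>i<n. \<eta> (Suc i)) \<le> 2 * \<beta> * (\<Sum>k. \<eta> (Suc k))"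
    using beta_pos by simp
  then show ?thesis using partial[of n] unfolding n by (intro real_le_rsqrt) linarith
qed

lemma scaled_gap_recursion:
  assumes opt: "\<And>l. d l \<le> d \<mu>" and "B > 0"
    and dist: "\<And>k. k \<ge> 1 \<Longrightarrow> norm (lam k - \<mu>) \<le> B" and k: "k \<ge> 1"
  defines "e \<equiv> \<lambda>k. \<beta> / B\<^sup>2 * (d \<mu> - d (lam k))"
  shows "e (Suc k) \<le> min (e k) 1 - (min (e k) 1)\<^sup>2/2 + \<beta> / B\<^sup>2 * \<eta> k"
proof (rule le_min_one_recursion)
  define s where "s = norm (resid k)"
  have scale: "\<beta> / B\<^sup>2 > 0" using beta_pos \<open>B > 0\<close> by simp
  have scale_bound: "\<beta> / B\<^sup>2 * (X - \<beta>/2 * s\<^sup>2 + \<eta> k)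
      = \<beta> / B\<^sup>2 * X - (\<beta> * s / B)\<^sup>2/2 + \<beta> / B\<^sup>2 * \<eta> k" for X
    using \<open>B > 0\<close> by (simp add: power2_eq_square field_simps)
  have "inner (\<mu> - lam k) (resid k) \<le> norm (lam k - \<mu>) * s"
    using norm_cauchy_schwarz[of "\<mu> - lam k" "resid k"] by (simp only: s_def norm_minus_commute)
  also have "\<dots> \<le> B * s" using dist[OF k] by (simp add: s_def mult_right_mono)
  finally have "d \<mu> - d (lam (Suc k)) \<le> B * s - \<beta>/2 * s\<^sup>2 + \<eta> k"
    using dual_gap_step[OF k, of \<mu>] by (simp add: s_def)
  from mult_left_mono[OF this less_imp_le[OF scale]]
  show "e (Suc k) \<le> \<beta> * s / B - (\<beta> * s / B)\<^sup>2/2 + \<beta> / B\<^sup>2 * \<eta> k"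
    using \<open>B > 0\<close> unfolding e_def scale_bound by (simp add: power2_eq_square)
  have "d \<mu> - d (lam (Suc k)) \<le> (d \<mu> - d (lam k)) - \<beta>/2 * s\<^sup>2 + \<eta> k"
    using dual_gap_step[OF k, of "lam k"] by (simp add: s_def)
  from mult_left_mono[OF this less_imp_le[OF scale]]
  show "e (Suc k) \<le> e k - (\<beta> * s / B)\<^sup>2/2 + \<beta> / B\<^sup>2 * \<eta> k"
    unfolding e_def scale_bound .
  show "0 \<le> e k" using opt beta_pos by (simp add: e_def)
  show "0 \<le> \<beta> * s / B" using beta_pos \<open>B > 0\<close> by (simp add: s_def)
qed

end

theorem theorem2:
  fixes A :: "real^'n^'m" and b :: "real^'m"
    and f :: "real^'n \<Rightarrow> real" and g :: "real^'n \<Rightarrow> ereal"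
    and \<beta> :: real
    and x :: "nat \<Rightarrow> real^'n" and lam :: "nat \<Rightarrow> real^'m" and \<eta> :: "nat \<Rightarrow> real"
    and lamstar :: "real^'m" and k0 :: nat
  assumes f_convex: "convex_on UNIV f"
    and f_diff: "\<And>z. f differentiable (at z)"
    and f_lip: "\<exists>L. \<forall>y z. norm (grad f y - grad f z) \<le> L * norm (y - z)"
    and g_proper: "proper_fun g" and g_convex: "convex_fun g" and g_closed: "closed_fun g"
    and g_bdd: "bounded (dom_e g)"
    and beta_pos: "\<beta> > 0"
    and lamstar_opt: "\<And>l. dualf f g A b \<beta> l \<le> dualf f g A b \<beta> lamstar"
    and x1: "x 1 \<in> dom_e g"
    and eta_pos: "\<And>k. k \<ge> 1 \<Longrightarrow> \<eta> k > 0"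
    and eta_noninc: "\<And>k. k \<ge> 1 \<Longrightarrow> \<eta> (Suc k) \<le> \<eta> k"
    and eta_sum: "summable (\<lambda>k. \<eta> (Suc k))"
    and x_step_dom: "\<And>k. k \<ge> 1 \<Longrightarrow> x (Suc k) \<in> dom_e g"
    and x_step: "\<And>k z. k \<ge> 1 \<Longrightarrow>
        ereal (inner (grad (fhat f A b \<beta> (lam k)) (x (Suc k))) (x (Suc k) - z))
          + g (x (Suc k)) - g z \<le> ereal (\<eta> k)"
    and lam_step: "\<And>k. k \<ge> 1 \<Longrightarrow> lam (Suc k) = lam k + \<beta> *\<^sub>R (A *v x (Suc k) - b)"
    and k0_ge: "k0 \<ge> 4"
    and k0_delta: "\<And>k. k \<ge> k0 \<Longrightarrow>
        dualf f g A b \<beta> lamstar - dualf f g A b \<beta> (lam k)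
          \<le> 1 / (2 * (\<beta> / (4 * (sqrt ((norm (lam 1 - lamstar))\<^sup>2 + 2 * \<beta> * (\<Sum>k. \<eta> (Suc k))))\<^sup>2)))"
    and k0_eta: "\<And>k. k \<ge> k0 \<Longrightarrow>
        \<eta> k \<le> 1 / (24 * (\<beta> / (4 * (sqrt ((norm (lam 1 - lamstar))\<^sup>2 + 2 * \<beta> * (\<Sum>k. \<eta> (Suc k))))\<^sup>2)))"
    and eta_ratio: "\<And>k. k \<ge> k0 \<Longrightarrow> sqrt (\<eta> (Suc k) / \<eta> k) \<ge> (real k - 2) / real k"
  shows "\<forall>k\<ge>k0.
    (let B = sqrt ((norm (lam 1 - lamstar))\<^sup>2 + 2 * \<beta> * (\<Sum>k. \<eta> (Suc k)));
         \<theta> = \<beta> / (4 * B\<^sup>2);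
         \<tau>1 = real k0 / (4 * \<theta>);
         \<tau>2 = 1 / (4 * \<theta> * sqrt (\<eta> k0))
     in dualf f g A b \<beta> lamstar - dualf f g A b \<beta> (lam k) \<le> \<tau>1 / real k + \<tau>2 * sqrt (\<eta> k))"
proof -
  interpret ial_iteration f g A b \<beta> x lam \<eta>
    using f_convex f_diff g_proper beta_pos x_step_dom x_step lam_step
    by unfold_locales (auto simp: proper_fun_def)
  define S where "S = (\<Sum>k. \<eta> (Suc k))"
  define B where "B = sqrt ((norm (lam 1 - lamstar))\<^sup>2 + 2 * \<beta> * S)"
  define \<theta> where "\<theta> = \<beta> / (4 * B\<^sup>2)"
  have "S > 0" unfolding S_def using eta_sum eta_pos by (intro suminf_pos) auto
  then have "B > 0" using beta_pos by (simp add: B_def add_nonneg_pos)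
  then have \<theta>: "\<theta> > 0" "\<beta> / B\<^sup>2 = 4 * \<theta>" using beta_pos by (simp_all add: \<theta>_def)
  have dist: "norm (lam k - lamstar) \<le> B" if "k \<ge> 1" for k
    unfolding B_def S_def using eta_pos
    by (intro multiplier_dist_bound[OF lamstar_opt _ eta_sum that]) (simp add: less_imp_le)
  have \<eta>_k0: "\<eta> k0 > 0" "6 * (4 * \<theta>) * \<eta> k0 \<le> 1"
    using eta_pos[of k0] k0_eta[of k0, folded S_def, folded B_def, folded \<theta>_def] k0_ge \<theta>
    by (simp_all add: field_simps)
  define e where "e k = 4 * \<theta> * (d lamstar - d (lam k))" for k
  have rate: "e k \<le> k0 / k + sqrt (\<eta> k / \<eta> k0)" if "k \<ge> k0" for k
  proof (rule rate_from_recursion[OF k0_ge _ _ eta_ratio _ _ _ \<eta>_k0(2) that])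
    fix j assume "j \<ge> k0"
    then show "\<eta> j > 0" "\<eta> (Suc j) \<le> \<eta> j" "0 \<le> e j"
      and "e (Suc j) \<le> min (e j) 1 - (min (e j) 1)\<^sup>2/2 + 4 * \<theta> * \<eta> j"
      using eta_pos eta_noninc k0_ge lamstar_opt \<theta>
        scaled_gap_recursion[OF lamstar_opt \<open>B > 0\<close> dist, of j]
      by (auto simp: e_def)
  next
    show "e k0 \<le> 2" using k0_delta[of k0, folded S_def, folded B_def, folded \<theta>_def] \<theta>
      by (simp add: e_def field_simps)
  qed
  show ?thesis
    unfolding Let_def S_def[symmetric] B_def[symmetric] \<theta>_def[symmetric]
    using rate \<theta> \<eta>_k0 by (auto simp: e_def real_sqrt_divide field_simps)
qed

end
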